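(* Let $\Lambda$ be a finite-dimensional algebra over an algebraically closed field $k$ and let $M_1,M_2$ be nonzero uniserial $\Lambda$-modules. Let $$\mathcal{S}(M_1,M_2)=\{1\le l\le\min\{\ell\ell(M_1),\ell\ell(M_2)\}: M_1/J^l(M_1)\simeq \mathrm{Soc}^l(M_2)\}.$$ For each $l\in\mathcal{S}(M_1,M_2)$ fix an isomorphism $M_1/J^l(M_1)\simeq\mathrm{Soc}^l(M_2)$ and let $\alpha_l$ be the composition $M_1\twoheadrightarrow M_1/J^l(M_1)\simeq\mathrm{Soc}^l(M_2)\hookrightarrow M_2$. Then $\{\alpha_l: l\in\mathcal{S}(M_1,M_2)\}$ is a $k$-basis of $\mathrm{Hom}_\Lambda(M_1,M_2)$.
   Context: $J$ denotes the Jacobson radical, $J^l(M)$ the $l$-th radical power of $M$, $\mathrm{Soc}^l(M)$ the $l$-th term of the socle series of $M$, and $\ell\ell(M)$ the Loewy length (smallest $d$ with $J^d(M)=0$). A module is uniserial if its submodules are totally ordered by inclusion. *)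

theory Defs
  imports Main "HOL-Computational_Algebra.Polynomial"
begin

text \<open>The field k is a type 'k; the algebra Lambda is a type 'a of class ring_1
  together with a k-scalar multiplication scal making it a finite-dimensional k-algebra.
  A (left) Lambda-module is an abelian group type 'm with an action act; its k-structure
  is induced via c \<mapsto> scal c 1. The module is the whole type.\<close>

definition alg_closed_field :: "'k::field itself \<Rightarrow> bool" where
  "alg_closed_field _ \<longleftrightarrow> (\<forall>p::'k poly. 0 < degree p \<longrightarrow> (\<exists>x. poly p x = 0))"

definition fd_algebra :: "('k::field \<Rightarrow> 'a::ring_1 \<Rightarrow> 'a) \<Rightarrow> bool" where
  "fd_algebra scal \<longleftrightarrow>
     (\<forall>c x y. scal c (x + y) = scal c x + scal c y) \<and>
     (\<forall>c d x. scal (c + d) x = scal c x + scal d x) \<and>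
     (\<forall>c d x. scal (c * d) x = scal c (scal d x)) \<and>
     (\<forall>x. scal 1 x = x) \<and>
     (\<forall>c x y. scal c (x * y) = scal c x * y) \<and>
     (\<forall>c x y. scal c (x * y) = x * scal c y) \<and>
     (\<exists>B. finite B \<and> (\<forall>x. \<exists>f. x = (\<Sum>b\<in>B. scal (f b) b)))"

definition is_module :: "('a::ring_1 \<Rightarrow> 'm::ab_group_add \<Rightarrow> 'm) \<Rightarrow> bool" where
  "is_module act \<longleftrightarrow>
     (\<forall>a x y. act a (x + y) = act a x + act a y) \<and>
     (\<forall>a b x. act (a + b) x = act a x + act b x) \<and>
     (\<forall>a b x. act (a * b) x = act a (act b x)) \<and>
     (\<forall>x. act 1 x = x)"

definition smul :: "('k::field \<Rightarrow> 'a::ring_1 \<Rightarrow> 'a) \<Rightarrow> ('a \<Rightarrow> 'm \<Rightarrow> 'm) \<Rightarrow> 'k \<Rightarrow> 'm \<Rightarrow> 'm" where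
  "smul scal act c x = act (scal c 1) x"

definition submod :: "('a::ring_1 \<Rightarrow> 'm::ab_group_add \<Rightarrow> 'm) \<Rightarrow> 'm set \<Rightarrow> bool" where
  "submod act N \<longleftrightarrow> 0 \<in> N \<and> (\<forall>x\<in>N. \<forall>y\<in>N. x + y \<in> N) \<and> (\<forall>a. \<forall>x\<in>N. act a x \<in> N)"

text \<open>Submodule generated by a set (sum of submodules = submodule generated by their union).\<close>
definition gen_submod :: "('a::ring_1 \<Rightarrow> 'm::ab_group_add \<Rightarrow> 'm) \<Rightarrow> 'm set \<Rightarrow> 'm set" where
  "gen_submod act X = \<Inter>{N. submod act N \<and> X \<subseteq> N}"

definition left_ideal :: "'a::ring_1 set \<Rightarrow> bool" where
  "left_ideal I \<longleftrightarrow> 0 \<in> I \<and> (\<forall>x\<in>I. \<forall>y\<in>I. x + y \<in> I) \<and> (\<forall>x\<in>I. - x \<in> I)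
     \<and> (\<forall>r. \<forall>x\<in>I. r * x \<in> I)"

definition maximal_left_ideal :: "'a::ring_1 set \<Rightarrow> bool" where
  "maximal_left_ideal I \<longleftrightarrow> left_ideal I \<and> I \<noteq> UNIV \<and>
     (\<forall>K. left_ideal K \<and> I \<subseteq> K \<and> K \<noteq> UNIV \<longrightarrow> K = I)"

definition jacobson :: "'a::ring_1 set" where
  "jacobson = \<Inter>{I. maximal_left_ideal I}"

primrec rad_pow :: "('a::ring_1 \<Rightarrow> 'm::ab_group_add \<Rightarrow> 'm) \<Rightarrow> nat \<Rightarrow> 'm set" where
  "rad_pow act 0 = UNIV"
| "rad_pow act (Suc l) = gen_submod act {act a x | a x. a \<in> jacobson \<and> x \<in> rad_pow act l}"

definition loewy_length :: "('a::ring_1 \<Rightarrow> 'm::ab_group_add \<Rightarrow> 'm) \<Rightarrow> nat" where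
  "loewy_length act = (LEAST d. rad_pow act d = {0})"

definition simple_over :: "('a::ring_1 \<Rightarrow> 'm::ab_group_add \<Rightarrow> 'm) \<Rightarrow> 'm set \<Rightarrow> 'm set \<Rightarrow> bool" where
  "simple_over act N S \<longleftrightarrow> submod act S \<and> N \<subset> S \<and>
     (\<forall>T. submod act T \<and> N \<subseteq> T \<and> T \<subseteq> S \<longrightarrow> T = N \<or> T = S)"

text \<open>Socle series: Soc^0 = 0, Soc^(l+1)/Soc^l = Soc(M/Soc^l), i.e. Soc^(l+1) is the
  sum of Soc^l and all submodules S with S/Soc^l simple.\<close>
primrec soc_ser :: "('a::ring_1 \<Rightarrow> 'm::ab_group_add \<Rightarrow> 'm) \<Rightarrow> nat \<Rightarrow> 'm set" where
  "soc_ser act 0 = {0}"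
| "soc_ser act (Suc l) = gen_submod act (soc_ser act l \<union> \<Union>{S. simple_over act (soc_ser act l) S})"

definition uniserial :: "('a::ring_1 \<Rightarrow> 'm::ab_group_add \<Rightarrow> 'm) \<Rightarrow> bool" where
  "uniserial act \<longleftrightarrow> (\<forall>N1 N2. submod act N1 \<and> submod act N2 \<longrightarrow> N1 \<subseteq> N2 \<or> N2 \<subseteq> N1)"

definition coset :: "'m::ab_group_add \<Rightarrow> 'm set \<Rightarrow> 'm set" where
  "coset x N = (\<lambda>n. x + n) ` N"

text \<open>phi is a Lambda-module isomorphism from the quotient M1/N (cosets, with operations
  defined on representatives) onto the submodule S of M2.\<close>
definition quot_iso :: "('a::ring_1 \<Rightarrow> 'm1::ab_group_add \<Rightarrow> 'm1) \<Rightarrow> ('a \<Rightarrow> 'm2::ab_group_add \<Rightarrow> 'm2)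
    \<Rightarrow> 'm1 set \<Rightarrow> 'm2 set \<Rightarrow> ('m1 set \<Rightarrow> 'm2) \<Rightarrow> bool" where
  "quot_iso act1 act2 N S phi \<longleftrightarrow>
     bij_betw phi (range (\<lambda>x. coset x N)) S \<and>
     (\<forall>x y. phi (coset (x + y) N) = phi (coset x N) + phi (coset y N)) \<and>
     (\<forall>a x. phi (coset (act1 a x) N) = act2 a (phi (coset x N)))"

definition hom :: "('a::ring_1 \<Rightarrow> 'm1::ab_group_add \<Rightarrow> 'm1) \<Rightarrow> ('a \<Rightarrow> 'm2::ab_group_add \<Rightarrow> 'm2)
    \<Rightarrow> ('m1 \<Rightarrow> 'm2) set" where
  "hom act1 act2 = {f. (\<forall>x y. f (x + y) = f x + f y) \<and> (\<forall>a x. f (act1 a x) = act2 a (f x))}"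

definition S_set :: "('a::ring_1 \<Rightarrow> 'm1::ab_group_add \<Rightarrow> 'm1) \<Rightarrow> ('a \<Rightarrow> 'm2::ab_group_add \<Rightarrow> 'm2)
    \<Rightarrow> nat set" where
  "S_set act1 act2 = {l. 1 \<le> l \<and> l \<le> min (loewy_length act1) (loewy_length act2) \<and>
     (\<exists>psi. quot_iso act1 act2 (rad_pow act1 l) (soc_ser act2 l) psi)}"

definition alpha :: "('a::ring_1 \<Rightarrow> 'm1::ab_group_add \<Rightarrow> 'm1) \<Rightarrow> (nat \<Rightarrow> 'm1 set \<Rightarrow> 'm2)
    \<Rightarrow> nat \<Rightarrow> 'm1 \<Rightarrow> 'm2" where
  "alpha act1 phi l x = phi l (coset x (rad_pow act1 l))"

end

theory Submission
  imports Defs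
begin

text \<open>Over a finite-dimensional algebra a uniserial module M has a unique composition series
  0 = N 0 \<subset> \<dots> \<subset> N n = M, and J^l(M) = N (n - l), Soc^l(M) = N l. Kernel and image of a
  homomorphism f : M1 \<rightarrow> M2 lie in these chains, and f induces an isomorphism
  M1/J^l(M1) \<cong> Soc^l(M2) where l is the length of its image; so f \<noteq> 0 forces l \<in> S(M1, M2).
  The \<alpha>_l are independent: evaluated at a generator of M1, the summand of largest index is
  the only one leaving N (l - 1). They span, by induction on the length l of the image of f:
  f and \<alpha>_l have the same kernel, so f = T \<circ> \<alpha>_l for an automorphism T of Soc^l(M2). An
  eigenvalue c of T exists since k is algebraically closed, and f - c \<alpha>_l then has a strictly
  larger kernel, hence a strictly shorter image.\<close>

section \<open>Eigenvectors over an algebraically closed field\<close>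

definition poly_apply :: "('k::field \<Rightarrow> 'b::ab_group_add \<Rightarrow> 'b) \<Rightarrow> ('b \<Rightarrow> 'b) \<Rightarrow> 'k poly \<Rightarrow> 'b \<Rightarrow> 'b"
  where "poly_apply scale T p v = (\<Sum>k\<le>degree p. scale (coeff p k) ((T ^^ k) v))"

context vector_space
begin

lemma dim_less_of_psubset:
  assumes "subspace P" "subspace Q" "P \<subset> Q" "finite W" "Q \<subseteq> span W"
  shows "dim P < dim Q"
proof -
  obtain B where B: "B \<subseteq> Q" "independent B" "Q \<subseteq> span B" "card B = dim Q"
    using basis_exists .
  obtain C where C: "C \<subseteq> P" "independent C" "P \<subseteq> span C" "card C = dim P"
    using basis_exists .
  obtain q where q: "q \<in> Q" "q \<notin> P" using assms(3) by auto
  have "span C = P" using C assms(1) span_minimal by blast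
  then have indep: "independent (insert q C)" using C(2) q by (intro independent_insertI) auto
  have "finite B" using independent_span_bound[OF assms(4) B(2)] B(1) assms(5) by auto
  moreover have "insert q C \<subseteq> span B" using B q C assms(3) by auto
  ultimately have "finite (insert q C)" "card (insert q C) \<le> card B"
    using independent_span_bound[OF _ indep] by auto
  moreover have "q \<notin> C" using q C by auto
  ultimately show ?thesis using B C by simp
qed

lemma poly_apply_eq_sum:
  "degree p < n \<Longrightarrow> poly_apply scale T p v = (\<Sum>k<n. coeff p k *s (T ^^ k) v)"
  unfolding poly_apply_def
  by (rule sum.mono_neutral_left) (auto simp: coeff_eq_0)

context
  fixes V T
  assumes subspace_V: "subspace V" and T_V: "\<And>v. v \<in> V \<Longrightarrow> T v \<in> V"
    and T_add: "\<And>x y. x \<in> V \<Longrightarrow> y \<in> V \<Longrightarrow> T (x + y) = T x + T y"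
    and T_scale: "\<And>c x. x \<in> V \<Longrightarrow> T (c *s x) = c *s T x"
begin

lemma funpow_in_subspace: "v \<in> V \<Longrightarrow> (T ^^ k) v \<in> V"
  by (induction k) (auto simp: T_V)

lemma T_sum_on_subspace: "finite A \<Longrightarrow> (\<And>i. i \<in> A \<Longrightarrow> f i \<in> V) \<Longrightarrow> T (\<Sum>i\<in>A. f i) = (\<Sum>i\<in>A. T (f i))"
proof (induction A rule: finite_induct)
  case empty
  have "T (0 + 0) = T 0 + T 0" using T_add subspace_0[OF subspace_V] by blast
  then show ?case by simp
next
  case (insert x F)
  have "sum f F \<in> V" using insert.prems by (intro subspace_sum[OF subspace_V]) auto
  then show ?case using insert T_add by simp
qed

lemma poly_apply_in_subspace: "v \<in> V \<Longrightarrow> poly_apply scale T p v \<in> V"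
  unfolding poly_apply_def
  by (intro subspace_sum[OF subspace_V] subspace_scale[OF subspace_V] funpow_in_subspace)

lemma poly_apply_linear_factor:
  assumes v: "v \<in> V"
  shows "poly_apply scale T ([:-a, 1:] * q) v = T (poly_apply scale T q v) - a *s poly_apply scale T q v"
proof -
  define n where "n = Suc (degree q)"
  have q_sum: "poly_apply scale T q v = (\<Sum>k<n. coeff q k *s (T ^^ k) v)"
    by (rule poly_apply_eq_sum) (simp add: n_def)
  have "degree ([:-a, 1:] * q) < Suc n"
    unfolding n_def using degree_mult_le[of "[:-a, 1:]" q] by simp
  then have "poly_apply scale T ([:-a, 1:] * q) v
      = (\<Sum>k<Suc n. coeff (smult (-a) q + pCons 0 q) k *s (T ^^ k) v)"
    by (simp add: poly_apply_eq_sum)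
  also have "\<dots> = (\<Sum>k<Suc n. (-a * coeff q k) *s (T ^^ k) v)
      + (\<Sum>k<Suc n. coeff (pCons 0 q) k *s (T ^^ k) v)"
    unfolding coeff_add coeff_smult scale_left_distrib sum.distrib by (rule refl)
  also have "(\<Sum>k<Suc n. (-a * coeff q k) *s (T ^^ k) v) = -a *s poly_apply scale T q v"
  proof -
    have "poly_apply scale T q v = (\<Sum>k<Suc n. coeff q k *s (T ^^ k) v)"
      by (rule poly_apply_eq_sum) (simp add: n_def)
    then show ?thesis by (simp only: scale_sum_right scale_scale)
  qed
  also have "(\<Sum>k<Suc n. coeff (pCons 0 q) k *s (T ^^ k) v) = (\<Sum>k<n. T (coeff q k *s (T ^^ k) v))"
    by (subst sum.lessThan_Suc_shift) (simp add: T_scale funpow_in_subspace[OF v])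
  also have "\<dots> = T (poly_apply scale T q v)"
    unfolding q_sum using funpow_in_subspace[OF v] subspace_V
    by (subst T_sum_on_subspace) (auto simp: subspace_scale)
  finally show ?thesis by (simp add: scale_minus_left)
qed

lemma eigenvector_of_annihilating_poly:
  assumes "alg_closed_field TYPE('a)"
  shows "p \<noteq> 0 \<Longrightarrow> v \<in> V \<Longrightarrow> v \<noteq> 0 \<Longrightarrow> poly_apply scale T p v = 0
    \<Longrightarrow> \<exists>c u. u \<in> V \<and> u \<noteq> 0 \<and> T u = c *s u"
proof (induction "degree p" arbitrary: p rule: less_induct)
  case less
  show ?case
  proof (cases "degree p = 0")
    case True
    then obtain c where "p = [:c:]" by (metis degree_eq_zeroE)
    then show ?thesis using less by (auto simp: poly_apply_def)
  next
    case False
    then obtain a where "poly p a = 0" using assms unfolding alg_closed_field_def by blast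
    then obtain q where q: "p = [:-a, 1:] * q" by (auto simp: poly_eq_0_iff_dvd elim: dvdE)
    with less.prems have "q \<noteq> 0" by auto
    then have "degree p = degree [:-a, 1:] + degree q" unfolding q by (intro degree_mult_eq) auto
    then have deg: "degree q < degree p" by simp
    have eigen: "T (poly_apply scale T q v) = a *s poly_apply scale T q v"
      using poly_apply_linear_factor[OF less.prems(2)] q less.prems by simp
    show ?thesis
    proof (cases "poly_apply scale T q v = 0")
      case True
      then show ?thesis using less.hyps[OF deg \<open>q \<noteq> 0\<close> less.prems(2,3)] by blast
    next
      case False
      then show ?thesis using eigen poly_apply_in_subspace[OF less.prems(2)] by blast
    qed
  qed
qed

text \<open>The first dim + 1 iterates of w under T either repeat or are linearly dependent.\<close>
lemma annihilating_poly_exists: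
  assumes W: "finite W" "V \<subseteq> span W" and w: "w \<in> V"
  shows "\<exists>p. p \<noteq> 0 \<and> poly_apply scale T p w = 0"
proof -
  define D where "D = card W"
  define it where "it k = (T ^^ k) w" for k
  show ?thesis
  proof (cases "inj_on it {..D}")
    case False
    then obtain i j where "i \<noteq> j" "it i = it j" unfolding inj_on_def by auto
    then obtain i j where ij: "i < j" "it i = it j" by (metis linorder_neqE_nat)
    define p where "p = monom (1::'a) j - monom 1 i"
    have coeff_p: "coeff p k = (if k = j then 1 else 0) - (if k = i then 1 else 0)" for k
      by (simp add: p_def coeff_monom)
    have "coeff p j \<noteq> 0" using ij by (simp add: coeff_p)
    then have "p \<noteq> 0" by auto
    have "degree p \<le> j" by (rule degree_le) (use ij in \<open>auto simp: coeff_p\<close>)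
    then have "poly_apply scale T p w = (\<Sum>k<Suc j. coeff p k *s it k)"
      unfolding it_def by (intro poly_apply_eq_sum) simp
    also have "\<dots> = (\<Sum>k<Suc j. if k = j then it k else 0) - (\<Sum>k<Suc j. if k = i then it k else 0)"
      unfolding coeff_p scale_left_diff_distrib sum_subtractf
      by (intro arg_cong2[where f = minus] sum.cong) auto
    also have "\<dots> = 0" using ij by (simp add: sum.delta)
    finally show ?thesis using \<open>p \<noteq> 0\<close> by blast
  next
    case True
    let ?S = "it ` {..D}"
    have "?S \<subseteq> span W" using W w funpow_in_subspace unfolding it_def by auto
    moreover have "card ?S = Suc D" using True by (simp add: card_image)
    ultimately have "dependent ?S"
      using independent_span_bound[OF W(1)] unfolding D_def by fastforce
    then obtain u where u: "\<exists>v\<in>?S. u v \<noteq> 0" "(\<Sum>v\<in>?S. u v *s v) = 0"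
      using dependent_finite[of ?S] by auto
    define p where "p = (\<Sum>k\<le>D. monom (u (it k)) k)"
    have coeff_p: "coeff p k = (if k \<le> D then u (it k) else 0)" for k
      by (simp add: p_def coeff_sum coeff_monom sum.delta' eq_commute)
    from u(1) obtain k0 where "k0 \<le> D" "u (it k0) \<noteq> 0" by auto
    then have "coeff p k0 \<noteq> 0" by (simp add: coeff_p)
    then have "p \<noteq> 0" by auto
    have "degree p \<le> D" by (rule degree_le) (auto simp: coeff_p)
    then have "poly_apply scale T p w = (\<Sum>k<Suc D. coeff p k *s it k)"
      unfolding it_def by (intro poly_apply_eq_sum) simp
    also have "\<dots> = (\<Sum>v\<in>?S. u v *s v)"
      by (simp add: coeff_p lessThan_Suc_atMost sum.reindex[OF True])
    finally show ?thesis using u(2) \<open>p \<noteq> 0\<close> by auto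
  qed
qed

lemma eigenvector_exists:
  assumes "alg_closed_field TYPE('a)" "finite W" "V \<subseteq> span W" "w \<in> V" "w \<noteq> 0"
  shows "\<exists>c u. u \<in> V \<and> u \<noteq> 0 \<and> T u = c *s u"
proof -
  obtain p where "p \<noteq> 0" "poly_apply scale T p w = 0"
    using annihilating_poly_exists assms(2-4) by blast
  then show ?thesis using eigenvector_of_annihilating_poly assms(1,4,5) by blast
qed

end

end

section \<open>The Jacobson radical of a finite-dimensional algebra\<close>

lemma left_ideal_add: "left_ideal I \<Longrightarrow> x \<in> I \<Longrightarrow> y \<in> I \<Longrightarrow> x + y \<in> I"
  and left_ideal_mult: "left_ideal I \<Longrightarrow> x \<in> I \<Longrightarrow> r * x \<in> I"
  unfolding left_ideal_def by blast+

lemma left_ideal_diff: "left_ideal I \<Longrightarrow> x \<in> I \<Longrightarrow> y \<in> I \<Longrightarrow> x - y \<in> I"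
  unfolding left_ideal_def by (metis diff_conv_add_uminus)

lemma left_ideal_sum: "left_ideal I \<Longrightarrow> (\<And>i. i \<in> A \<Longrightarrow> f i \<in> I) \<Longrightarrow> sum f A \<in> I"
  by (induction A rule: infinite_finite_induct) (auto simp: left_ideal_def)

lemma left_ideal_Inter: "(\<And>m. m \<in> F \<Longrightarrow> left_ideal m) \<Longrightarrow> left_ideal (\<Inter>F)"
  unfolding left_ideal_def by auto

lemma left_ideal_UNIV: "left_ideal UNIV"
  unfolding left_ideal_def by simp

lemma maximal_left_idealD:
  assumes "maximal_left_ideal m"
  shows "left_ideal m" "m \<noteq> UNIV" "\<And>K. left_ideal K \<Longrightarrow> m \<subseteq> K \<Longrightarrow> K \<noteq> UNIV \<Longrightarrow> K = m"
  using assms unfolding maximal_left_ideal_def by blast+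

lemma jacobson_subset: "maximal_left_ideal m \<Longrightarrow> jacobson \<subseteq> m"
  unfolding jacobson_def by blast

lemma maximal_left_ideal_comaximal:
  assumes m: "maximal_left_ideal m" and C: "left_ideal C" "\<not> C \<subseteq> m"
  shows "\<exists>e\<in>C. 1 - e \<in> m"
proof -
  obtain t where t: "t \<in> C" "t \<notin> m" using C by auto
  define K where "K = {u + r * t | u r. u \<in> m}"
  have m_ideal: "left_ideal m" using maximal_left_idealD[OF m] by blast
  have "left_ideal K"
    unfolding left_ideal_def K_def
  proof (intro conjI ballI allI)
    have "0 = 0 + 0 * t" "0 \<in> m" using m_ideal by (simp_all add: left_ideal_def)
    then show "0 \<in> {u + r * t | u r. u \<in> m}" by blast
    fix x y assume "x \<in> {u + r * t | u r. u \<in> m}" "y \<in> {u + r * t | u r. u \<in> m}"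
    then obtain u1 r1 u2 r2 where x: "x = u1 + r1 * t" "u1 \<in> m" and y: "y = u2 + r2 * t" "u2 \<in> m"
      by blast
    have "x + y = (u1 + u2) + (r1 + r2) * t" using x y by (simp add: algebra_simps)
    then show "x + y \<in> {u + r * t | u r. u \<in> m}" using x y left_ideal_add[OF m_ideal] by blast
    have "- x = (- u1) + (- r1) * t" using x by (simp add: algebra_simps)
    then show "- x \<in> {u + r * t | u r. u \<in> m}" using x m_ideal unfolding left_ideal_def by blast
    fix s
    have "s * x = (s * u1) + (s * r1) * t" using x by (simp add: algebra_simps)
    then show "s * x \<in> {u + r * t | u r. u \<in> m}" using x left_ideal_mult[OF m_ideal] by blast
  qed
  moreover have "m \<subseteq> K"
  proof
    fix u assume "u \<in> m"
    moreover have "u = u + 0 * t" by simp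
    ultimately show "u \<in> K" unfolding K_def by blast
  qed
  moreover have "t \<in> K"
  proof -
    have "t = 0 + 1 * t" "0 \<in> m" using m_ideal by (simp_all add: left_ideal_def)
    then show ?thesis unfolding K_def by blast
  qed
  ultimately have "K = UNIV" using maximal_left_idealD[OF m] t by blast
  then obtain u r where "1 = u + r * t" "u \<in> m" unfolding K_def by blast
  moreover have "r * t \<in> C" using left_ideal_mult[OF C(1) t(1)] .
  ultimately show ?thesis by (metis add_diff_cancel_right')
qed

locale fin_dim_algebra =
  fixes scal :: "'k::field \<Rightarrow> 'a::ring_1 \<Rightarrow> 'a"
  assumes fd_algebra: "fd_algebra scal"
begin

lemma scal_add_right: "scal c (x + y) = scal c x + scal c y"
  and scal_add_left: "scal (c + d) x = scal c x + scal d x"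
  and scal_scal: "scal (c * d) x = scal c (scal d x)"
  and scal_one: "scal 1 x = x"
  and scal_mult_left: "scal c (x * y) = scal c x * y"
  and scal_mult_right: "scal c (x * y) = x * scal c y"
  using fd_algebra unfolding fd_algebra_def by blast+

lemma scal_eq_mult: "scal c x = scal c 1 * x"
  using scal_mult_left[of c 1 x] by simp

lemma scal_one_commute: "scal c 1 * x = x * scal c 1"
  using scal_mult_right[of c x 1] by (simp add: scal_eq_mult[symmetric])

sublocale L: vector_space scal
  by unfold_locales (auto simp: scal_add_right scal_add_left scal_scal scal_one)

lemma finite_spanning_set: "\<exists>B. finite B \<and> L.span B = UNIV"
proof -
  obtain B where B: "finite B" "\<forall>x. \<exists>f. x = (\<Sum>b\<in>B. scal (f b) b)"
    using fd_algebra unfolding fd_algebra_def by blast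
  have "x \<in> L.span B" for x
  proof -
    obtain f where "x = (\<Sum>b\<in>B. scal (f b) b)" using B by blast
    then show ?thesis by (simp add: L.span_sum L.span_scale L.span_base)
  qed
  then show ?thesis using B by blast
qed

lemma left_ideal_subspace: "left_ideal I \<Longrightarrow> L.subspace I"
  unfolding L.subspace_def
proof (intro conjI ballI allI)
  assume I: "left_ideal I"
  show "0 \<in> I" using I unfolding left_ideal_def by blast
  fix x assume x: "x \<in> I"
  show "x + y \<in> I" if "y \<in> I" for y using I x that by (rule left_ideal_add)
  fix c
  have "scal c 1 * x \<in> I" using I x by (rule left_ideal_mult)
  then show "scal c x \<in> I" by (subst scal_eq_mult)
qed

text \<open>Finite dimension makes the Jacobson radical a finite intersection of maximal left ideals,
  and one of minimal cardinality is irredundant.\<close>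
lemma jacobson_irredundant_Inter:
  "\<exists>F :: 'a set set. finite F \<and> (\<forall>m\<in>F. maximal_left_ideal m) \<and> \<Inter>F = jacobson
     \<and> (\<forall>m\<in>F. \<not> \<Inter>(F - {m}) \<subseteq> m)"
proof -
  obtain B where B: "finite B" "L.span B = UNIV" using finite_spanning_set by blast
  let ?P = "\<lambda>F :: 'a set set. finite F \<and> (\<forall>m\<in>F. maximal_left_ideal m)"
  have "?P {}" by simp
  from ex_has_least_nat[of ?P, OF this, of "\<lambda>F. L.dim (\<Inter>F)"]
  obtain F0 where "?P F0 \<and> (\<forall>G. ?P G \<longrightarrow> L.dim (\<Inter>F0) \<le> L.dim (\<Inter>G))" ..
  then have F0: "?P F0" "\<And>G. ?P G \<Longrightarrow> L.dim (\<Inter>F0) \<le> L.dim (\<Inter>G)" by blast+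
  have ideal: "left_ideal (\<Inter>F)" if "?P F" for F
    using that maximal_left_idealD(1) by (intro left_ideal_Inter) auto
  have "\<Inter>F0 \<subseteq> m" if m: "maximal_left_ideal m" for m
  proof (rule ccontr)
    assume "\<not> \<Inter>F0 \<subseteq> m"
    then have "\<Inter>(insert m F0) \<subset> \<Inter>F0" by auto
    moreover have "?P (insert m F0)" using F0(1) m by simp
    ultimately have "L.dim (\<Inter>(insert m F0)) < L.dim (\<Inter>F0)"
      using ideal[OF \<open>?P (insert m F0)\<close>] ideal[OF F0(1)] B
      by (intro L.dim_less_of_psubset[of _ _ B] left_ideal_subspace) auto
    with F0(2)[OF \<open>?P (insert m F0)\<close>] show False by simp
  qed
  then have "\<Inter>F0 \<subseteq> jacobson" unfolding jacobson_def by (intro Inter_greatest) simp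
  moreover have "jacobson \<subseteq> \<Inter>F0" using F0(1) jacobson_subset by (intro Inter_greatest) auto
  ultimately have "\<Inter>F0 = jacobson" by (rule equalityI)
  let ?Q = "\<lambda>F. ?P F \<and> \<Inter>F = jacobson"
  have "?Q F0" using F0(1) \<open>\<Inter>F0 = jacobson\<close> by blast
  then have "\<exists>F. ?Q F \<and> (\<forall>G. ?Q G \<longrightarrow> card F \<le> card G)"
    using ex_has_least_nat[of ?Q F0 card] by blast
  then obtain F where F: "?P F" "\<Inter>F = jacobson" and F_min: "\<forall>G. ?Q G \<longrightarrow> card F \<le> card G"
    by blast
  have "\<not> \<Inter>(F - {m}) \<subseteq> m" if m: "m \<in> F" for m
  proof
    assume "\<Inter>(F - {m}) \<subseteq> m"
    then have "\<Inter>(F - {m}) = \<Inter>F" using m by auto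
    moreover have "?P (F - {m})" using F(1) by simp
    ultimately have "card F \<le> card (F - {m})" using F(2) F_min by simp
    moreover have "card (F - {m}) < card F" using m F(1) by (intro card_Diff1_less) simp_all
    ultimately show False by simp
  qed
  with F show ?thesis by blast
qed

text \<open>The images of the e m form a complete family of orthogonal idempotents of the semisimple
  ring \<open>\<Lambda>/J\<close>.\<close>
lemma jacobson_decomposition:
  "\<exists>(F :: 'a set set) e. finite F \<and> (\<forall>m\<in>F. maximal_left_ideal m) \<and> 1 - (\<Sum>m\<in>F. e m) \<in> jacobson
     \<and> (\<forall>m\<in>F. \<forall>b\<in>m. b * e m \<in> jacobson)"
proof -
  obtain F :: "'a set set" where F: "finite F" "\<forall>m\<in>F. maximal_left_ideal m" "\<Inter>F = jacobson"
    "\<forall>m\<in>F. \<not> \<Inter>(F - {m}) \<subseteq> m"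
    using jacobson_irredundant_Inter by blast
  have ideal: "m \<in> F \<Longrightarrow> left_ideal m" for m using F(2) maximal_left_idealD(1) by blast
  have "\<forall>m\<in>F. \<exists>e\<in>\<Inter>(F - {m}). 1 - e \<in> m"
    using F ideal by (intro ballI maximal_left_ideal_comaximal left_ideal_Inter) auto
  then obtain e where e: "\<And>m. m \<in> F \<Longrightarrow> e m \<in> \<Inter>(F - {m}) \<and> 1 - e m \<in> m"
    by (metis (no_types))
  have e_other: "e m \<in> m'" if "m \<in> F" "m' \<in> F" "m' \<noteq> m" for m m'
    using e[OF that(1)] that by blast
  have "1 - (\<Sum>m\<in>F. e m) \<in> m'" if m': "m' \<in> F" for m'
  proof -
    have "1 - (\<Sum>m\<in>F. e m) = (1 - e m') - (\<Sum>m\<in>F - {m'}. e m)"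
      using F(1) m' by (simp add: sum.remove algebra_simps)
    moreover have "(\<Sum>m\<in>F - {m'}. e m) \<in> m'"
      using ideal[OF m'] e_other m' by (intro left_ideal_sum) auto
    moreover have "1 - e m' \<in> m'" using e m' by blast
    ultimately show ?thesis using ideal[OF m'] left_ideal_diff by metis
  qed
  moreover have "b * e m \<in> m'" if "m \<in> F" "b \<in> m" "m' \<in> F" for b m m'
  proof (cases "m' = m")
    case True
    have "b * (1 - e m) \<in> m" using e that ideal left_ideal_mult by blast
    then have "b - b * (1 - e m) \<in> m" using that ideal left_ideal_diff by blast
    then show ?thesis using True by (simp add: algebra_simps)
  next
    case False
    then have "e m \<in> m'" using e_other that by blast
    then show ?thesis using that ideal left_ideal_mult by blast
  qed
  ultimately have "1 - (\<Sum>m\<in>F. e m) \<in> jacobson" "\<forall>m\<in>F. \<forall>b\<in>m. b * e m \<in> jacobson"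
    unfolding F(3)[symmetric] by blast+
  with F(1,2) show ?thesis by blast
qed

end

section \<open>Uniserial modules\<close>

lemma card_strict_lower_set_less:
  assumes "finite A" "P \<in> A" "P \<subset> Q"
  shows "card {R\<in>A. R \<subset> P} < card {R\<in>A. R \<subset> Q}"
proof -
  have "{R\<in>A. R \<subset> P} \<subset> {R\<in>A. R \<subset> Q}" using assms(2,3) by auto
  then show ?thesis using assms(1) by (intro psubset_card_mono) auto
qed

lemma chain_rank_bij:
  assumes fin: "finite A" and chain: "\<And>P Q. P \<in> A \<Longrightarrow> Q \<in> A \<Longrightarrow> P \<subseteq> Q \<or> Q \<subseteq> P"
  shows "bij_betw (\<lambda>P. card {Q\<in>A. Q \<subset> P}) A {..<card A}"
proof -
  define r where "r P = card {Q\<in>A. Q \<subset> P}" for P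
  have "inj_on r A"
  proof (rule inj_onI)
    fix P Q assume PQ: "P \<in> A" "Q \<in> A" "r P = r Q"
    show "P = Q"
    proof (rule ccontr)
      assume "P \<noteq> Q"
      then have "P \<subset> Q \<or> Q \<subset> P" using chain[OF PQ(1,2)] by auto
      then have "r P < r Q \<or> r Q < r P"
        unfolding r_def using card_strict_lower_set_less[OF fin] PQ(1,2) by blast
      then show False using PQ(3) by simp
    qed
  qed
  moreover have "r ` A \<subseteq> {..<card A}"
  proof
    fix x assume "x \<in> r ` A"
    then obtain P where P: "P \<in> A" "x = r P" by auto
    have "{Q\<in>A. Q \<subset> P} \<subset> A" using P by auto
    then have "card {Q\<in>A. Q \<subset> P} < card A" using fin by (intro psubset_card_mono) auto
    then show "x \<in> {..<card A}" using P by (simp add: r_def)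
  qed
  moreover have "card (r ` A) = card {..<card A}" using card_image[OF \<open>inj_on r A\<close>] by simp
  ultimately have "r ` A = {..<card A}" by (intro card_subset_eq) auto
  with \<open>inj_on r A\<close> show ?thesis unfolding bij_betw_def r_def by simp
qed

locale uniserial_module = fin_dim_algebra scal for scal :: "'k::field \<Rightarrow> 'a::ring_1 \<Rightarrow> 'a" +
  fixes act :: "'a \<Rightarrow> 'm::ab_group_add \<Rightarrow> 'm"
  assumes is_module: "is_module act" and uniserial: "uniserial act"
    and nonzero: "(UNIV :: 'm set) \<noteq> {0}"
begin

lemma act_add: "act a (x + y) = act a x + act a y"
  and act_add_left: "act (a + b) x = act a x + act b x"
  and act_mult: "act (a * b) x = act a (act b x)"
  and act_one[simp]: "act 1 x = x"
  using is_module unfolding is_module_def by blast+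

lemma act_zero[simp]: "act a 0 = 0"
  using act_add[of a 0 0] by simp

lemma act_zero_left[simp]: "act 0 x = 0"
  using act_add_left[of 0 0 x] by simp

lemma act_minus: "act a (- x) = - act a x"
  using act_add[of a x "- x"] by (metis act_zero add.right_inverse minus_unique)

lemma act_minus_left: "act (- a) x = - act a x"
  using act_add_left[of a "- a" x] by (metis act_zero_left add.right_inverse minus_unique)

lemma act_diff: "act a (x - y) = act a x - act a y"
  using act_add[of a x "- y"] by (simp add: act_minus)

lemma act_diff_left: "act (a - b) x = act a x - act b x"
  using act_add_left[of a "- b" x] by (simp add: act_minus_left)

lemma act_sum_left: "act (sum f A) x = (\<Sum>i\<in>A. act (f i) x)"
  by (induction A rule: infinite_finite_induct) (auto simp: act_add_left)

abbreviation kscale :: "'k \<Rightarrow> 'm \<Rightarrow> 'm" where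
  "kscale \<equiv> smul scal act"

sublocale V: vector_space kscale
proof unfold_locales
  fix c d :: 'k and x y :: 'm
  show "kscale c (x + y) = kscale c x + kscale c y" by (simp add: smul_def act_add)
  show "kscale (c + d) x = kscale c x + kscale d x" by (simp add: smul_def act_add_left scal_add_left)
  have "scal c 1 * scal d 1 = scal (c * d) 1" by (simp only: scal_eq_mult[symmetric] scal_scal)
  then show "kscale c (kscale d x) = kscale (c * d) x" by (simp add: smul_def act_mult[symmetric])
  show "kscale 1 x = x" by (simp add: smul_def scal_one)
qed

lemma act_kscale: "act a (kscale c x) = kscale c (act a x)"
  by (simp add: smul_def act_mult[symmetric] scal_one_commute)

lemma act_scal: "act (scal c a) x = kscale c (act a x)"
  by (simp add: smul_def act_mult[symmetric] scal_eq_mult[symmetric])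

lemma submod_0: "submod act P \<Longrightarrow> 0 \<in> P"
  and submod_add: "submod act P \<Longrightarrow> x \<in> P \<Longrightarrow> y \<in> P \<Longrightarrow> x + y \<in> P"
  and submod_act: "submod act P \<Longrightarrow> x \<in> P \<Longrightarrow> act a x \<in> P"
  unfolding submod_def by blast+

lemma submod_minus: "submod act P \<Longrightarrow> x \<in> P \<Longrightarrow> - x \<in> P"
  using submod_act[of P x "- 1"] by (simp add: act_minus_left)

lemma submod_diff: "submod act P \<Longrightarrow> x \<in> P \<Longrightarrow> y \<in> P \<Longrightarrow> x - y \<in> P"
  using submod_add[of P x "- y"] submod_minus by simp

lemma submod_kscale: "submod act P \<Longrightarrow> x \<in> P \<Longrightarrow> kscale c x \<in> P"
  by (simp add: smul_def submod_act)

lemma submod_kscale_cancel: "submod act P \<Longrightarrow> c \<noteq> 0 \<Longrightarrow> kscale c x \<in> P \<Longrightarrow> x \<in> P"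
  using submod_kscale[of P "kscale c x" "inverse c"] by simp

lemma submod_sum: "submod act P \<Longrightarrow> (\<And>i. i \<in> A \<Longrightarrow> f i \<in> P) \<Longrightarrow> sum f A \<in> P"
  by (induction A rule: infinite_finite_induct) (auto simp: submod_0 submod_add)

lemma submod_subspace: "submod act P \<Longrightarrow> V.subspace P"
  unfolding V.subspace_def by (auto simp: submod_0 submod_add submod_kscale)

lemma submod_UNIV: "submod act UNIV"
  and submod_zero: "submod act {0}"
  unfolding submod_def by simp_all

lemma gen_submod_submod: "submod act (gen_submod act X)"
  unfolding gen_submod_def submod_def by auto

lemma gen_submod_superset: "X \<subseteq> gen_submod act X"
  unfolding gen_submod_def by auto

lemma gen_submod_least: "submod act P \<Longrightarrow> X \<subseteq> P \<Longrightarrow> gen_submod act X \<subseteq> P"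
  unfolding gen_submod_def by auto

lemma gen_submod_eq: "submod act P \<Longrightarrow> gen_submod act P = P"
  using gen_submod_least gen_submod_superset by blast

lemma submod_left_ideal_orbit:
  assumes K: "left_ideal K" and Q: "submod act Q"
  shows "submod act {act r x + z | r z. r \<in> K \<and> z \<in> Q}"
  unfolding submod_def
proof (intro conjI ballI allI)
  have "0 = act 0 x + 0" "0 \<in> K" "0 \<in> Q" using K Q by (simp_all add: left_ideal_def submod_0)
  then show "0 \<in> {act r x + z | r z. r \<in> K \<and> z \<in> Q}" by blast
next
  fix y1 y2 assume "y1 \<in> {act r x + z | r z. r \<in> K \<and> z \<in> Q}" "y2 \<in> {act r x + z | r z. r \<in> K \<and> z \<in> Q}"
  then obtain r1 z1 r2 z2 where y: "y1 = act r1 x + z1" "y2 = act r2 x + z2"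
    and mem: "r1 \<in> K" "z1 \<in> Q" "r2 \<in> K" "z2 \<in> Q" by blast
  have "y1 + y2 = act (r1 + r2) x + (z1 + z2)" using y by (simp add: act_add_left algebra_simps)
  moreover have "r1 + r2 \<in> K" "z1 + z2 \<in> Q" using mem K Q by (simp_all add: left_ideal_add submod_add)
  ultimately show "y1 + y2 \<in> {act r x + z | r z. r \<in> K \<and> z \<in> Q}" by blast
next
  fix a y assume "y \<in> {act r x + z | r z. r \<in> K \<and> z \<in> Q}"
  then obtain r z where y: "y = act r x + z" "r \<in> K" "z \<in> Q" by blast
  have "act a y = act (a * r) x + act a z" using y by (simp add: act_add act_mult)
  moreover have "a * r \<in> K" "act a z \<in> Q" using y K Q by (simp_all add: left_ideal_mult submod_act)
  ultimately show "act a y \<in> {act r x + z | r z. r \<in> K \<and> z \<in> Q}" by blast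
qed

lemma left_ideal_annihilator: "submod act Q \<Longrightarrow> left_ideal {b. act b y \<in> Q}"
  unfolding left_ideal_def
  by (auto simp: act_add_left act_minus_left act_mult submod_0 submod_add submod_minus submod_act)

definition cyclic :: "'m \<Rightarrow> 'm set" where
  "cyclic x = range (\<lambda>a. act a x)"

lemma cyclic_submod: "submod act (cyclic x)"
  unfolding submod_def cyclic_def
proof (intro conjI ballI allI)
  show "0 \<in> range (\<lambda>a. act a x)" by (metis act_zero_left rangeI)
  fix y z a assume "y \<in> range (\<lambda>a. act a x)"
  then obtain b where b: "y = act b x" by blast
  show "act a y \<in> range (\<lambda>a. act a x)" using b by (metis act_mult rangeI)
  assume "z \<in> range (\<lambda>a. act a x)"
  then obtain c where "z = act c x" by blast
  then show "y + z \<in> range (\<lambda>a. act a x)" using b by (metis act_add_left rangeI)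
qed

lemma cyclic_self: "x \<in> cyclic x"
  unfolding cyclic_def by (metis act_one rangeI)

lemma cyclic_eq_span:
  assumes B: "L.span B = UNIV"
  shows "cyclic x = V.span ((\<lambda>b. act b x) ` B)"
proof
  let ?P = "{a. act a x \<in> V.span ((\<lambda>b. act b x) ` B)}"
  have "L.subspace ?P"
    unfolding L.subspace_def by (auto simp: act_add_left act_scal V.span_zero V.span_add V.span_scale)
  moreover have "B \<subseteq> ?P" by (auto intro: V.span_base)
  ultimately have "L.span B \<subseteq> ?P" by (rule L.span_minimal[rotated])
  then show "cyclic x \<subseteq> V.span ((\<lambda>b. act b x) ` B)" using B unfolding cyclic_def by auto
  show "V.span ((\<lambda>b. act b x) ` B) \<subseteq> cyclic x"
    by (rule V.span_minimal) (auto simp: cyclic_def submod_subspace[OF cyclic_submod[unfolded cyclic_def]])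
qed

text \<open>A cyclic submodule of maximal dimension must be everything, since by uniseriality any other
  cyclic submodule is comparable with it.\<close>
lemma finite_spanning_set_module: "\<exists>W. finite W \<and> V.span W = UNIV"
proof -
  obtain B where B: "finite B" "L.span B = UNIV" using finite_spanning_set by blast
  have dim_le: "V.dim (cyclic x) \<le> card B" for x
  proof -
    have "V.dim (cyclic x) \<le> card ((\<lambda>b. act b x) ` B)"
      using B by (intro V.dim_le_card) (auto simp: cyclic_eq_span[OF B(2)])
    also have "\<dots> \<le> card B" by (rule card_image_le[OF B(1)])
    finally show ?thesis .
  qed
  let ?D = "range (\<lambda>x. V.dim (cyclic x))"
  have "?D \<subseteq> {..card B}" using dim_le by auto
  then have fin: "finite ?D" by (rule finite_subset) simp
  have "Max ?D \<in> ?D" by (rule Max_in[OF fin]) simp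
  then obtain x0 where x0: "Max ?D = V.dim (cyclic x0)" by blast
  have "y \<in> cyclic x0" for y
  proof (rule ccontr)
    assume y: "y \<notin> cyclic x0"
    have "cyclic y \<subseteq> cyclic x0 \<or> cyclic x0 \<subseteq> cyclic y"
      using uniserial cyclic_submod[of y] cyclic_submod[of x0] unfolding uniserial_def by blast
    then have "cyclic x0 \<subset> cyclic y" using y cyclic_self[of y] by blast
    then have "V.dim (cyclic x0) < V.dim (cyclic y)"
      using B by (intro V.dim_less_of_psubset[of _ _ "(\<lambda>b. act b y) ` B"])
        (auto simp: submod_subspace cyclic_submod cyclic_eq_span[OF B(2)])
    moreover have "V.dim (cyclic y) \<le> Max ?D" using fin by (intro Max_ge) simp_all
    ultimately show False using x0 by simp
  qed
  then have "V.span ((\<lambda>b. act b x0) ` B) = UNIV" using cyclic_eq_span[OF B(2)] by auto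
  then show ?thesis using B by blast
qed

lemma dim_submod_less:
  assumes "submod act P" "submod act Q" "P \<subset> Q"
  shows "V.dim P < V.dim Q"
proof -
  obtain W where "finite W" "V.span W = UNIV" using finite_spanning_set_module by blast
  then show ?thesis using assms by (intro V.dim_less_of_psubset[of _ _ W]) (auto simp: submod_subspace)
qed

definition submods :: "'m set set" where
  "submods = {P. submod act P}"

lemma submods_chain: "P \<in> submods \<Longrightarrow> Q \<in> submods \<Longrightarrow> P \<subseteq> Q \<or> Q \<subseteq> P"
  using uniserial unfolding submods_def uniserial_def by blast

lemma finite_submods: "finite submods"
proof -
  obtain W where W: "finite W" "V.span W = UNIV" using finite_spanning_set_module by blast
  have "inj_on V.dim submods"
  proof (rule inj_onI)
    fix P Q assume PQ: "P \<in> submods" "Q \<in> submods" "V.dim P = V.dim Q"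
    show "P = Q"
    proof (rule ccontr)
      assume "P \<noteq> Q"
      then have "P \<subset> Q \<or> Q \<subset> P" using submods_chain[OF PQ(1,2)] by blast
      then show False using dim_submod_less PQ unfolding submods_def by fastforce
    qed
  qed
  moreover have "V.dim ` submods \<subseteq> {..card W}"
    using W by (auto intro: V.dim_le_card)
  then have "finite (V.dim ` submods)" by (rule finite_subset) simp
  ultimately show ?thesis by (metis finite_imageD)
qed

text \<open>The submodules form a finite chain; N i is its i-th member, counted from the bottom.\<close>
definition rank :: "'m set \<Rightarrow> nat" where
  "rank P = card {Q\<in>submods. Q \<subset> P}"

definition len :: nat where
  "len = card submods - 1"

definition N :: "nat \<Rightarrow> 'm set" where
  "N i = inv_into submods rank i"

lemma rank_bij: "bij_betw rank submods {..<card submods}"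
  unfolding rank_def[abs_def] using chain_rank_bij[OF finite_submods submods_chain] .

lemma card_submods: "card submods = Suc len" and len_pos: "1 \<le> len"
proof -
  have "{{0}, UNIV} \<subseteq> submods" unfolding submods_def by (auto simp: submod_zero submod_UNIV)
  then have "card {{0::'m}, UNIV} \<le> card submods" by (rule card_mono[OF finite_submods])
  moreover have "card {{0::'m}, UNIV} = 2" using nonzero by simp
  ultimately show "card submods = Suc len" "1 \<le> len" unfolding len_def by auto
qed

lemma N_submod: "i \<le> len \<Longrightarrow> submod act (N i)"
  using rank_bij card_submods unfolding N_def submods_def
  by (metis bij_betw_def inv_into_into lessThan_iff less_Suc_eq_le mem_Collect_eq)

lemma rank_N: "i \<le> len \<Longrightarrow> rank (N i) = i"
  unfolding N_def using rank_bij card_submods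
  by (metis bij_betw_inv_into_right lessThan_iff less_Suc_eq_le)

lemma submod_eq_N:
  assumes "submod act P"
  obtains i where "i \<le> len" "P = N i"
proof -
  have P: "P \<in> submods" using assms unfolding submods_def by simp
  then have "rank P \<in> {..<card submods}" using rank_bij unfolding bij_betw_def by blast
  then have "rank P \<le> len" using card_submods by simp
  moreover have "N (rank P) = P" unfolding N_def using rank_bij P by (metis bij_betw_def inv_into_f_f)
  ultimately show ?thesis using that by simp
qed

lemma N_strict_mono: "i < j \<Longrightarrow> j \<le> len \<Longrightarrow> N i \<subset> N j"
proof -
  assume ij: "i < j" "j \<le> len"
  have mem: "N i \<in> submods" "N j \<in> submods" using ij N_submod unfolding submods_def by auto
  show "N i \<subset> N j"
  proof (rule ccontr)
    assume "\<not> N i \<subset> N j"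
    then have "N j \<subseteq> N i" using submods_chain[OF mem] by blast
    then have "rank (N j) \<le> rank (N i)"
      unfolding rank_def using finite_submods by (intro card_mono) auto
    then show False using ij rank_N by simp
  qed
qed

lemma N_mono: "i \<le> j \<Longrightarrow> j \<le> len \<Longrightarrow> N i \<subseteq> N j"
  using N_strict_mono by (metis le_eq_less_or_eq order_refl psubset_imp_subset)

lemma N_subset_iff: "i \<le> len \<Longrightarrow> j \<le> len \<Longrightarrow> N i \<subseteq> N j \<longleftrightarrow> i \<le> j"
  using N_strict_mono[of j i] N_mono[of i j] by (cases "i \<le> j") auto

lemma N_eq_iff: "i \<le> len \<Longrightarrow> j \<le> len \<Longrightarrow> N i = N j \<longleftrightarrow> i = j"
  using N_subset_iff by (metis order_antisym order_refl)

lemma N_0: "N 0 = {0}"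
proof -
  obtain i where "i \<le> len" "{0} = N i" by (rule submod_eq_N[OF submod_zero])
  then have "N 0 \<subseteq> {0}" using N_mono[of 0 i] by simp
  moreover have "0 \<in> N 0" using N_submod[of 0] submod_0 by simp
  ultimately show ?thesis by blast
qed

lemma N_len: "N len = UNIV"
proof -
  obtain i where "i \<le> len" "UNIV = N i" by (rule submod_eq_N[OF submod_UNIV])
  then show ?thesis using N_mono[of i len] by auto
qed

lemma N_Suc_subset: "submod act P \<Longrightarrow> i < len \<Longrightarrow> N i \<subset> P \<Longrightarrow> N (Suc i) \<subseteq> P"
proof -
  assume P: "submod act P" "i < len" "N i \<subset> P"
  obtain k where k: "k \<le> len" "P = N k" by (rule submod_eq_N[OF P(1)])
  have "\<not> k \<le> i" using P k N_mono[of k i] by auto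
  then show ?thesis using k N_mono[of "Suc i" k] by simp
qed

lemma eq_N_if_not_subset_pred:
  "submod act P \<Longrightarrow> j \<le> len \<Longrightarrow> P \<subseteq> N j \<Longrightarrow> \<not> P \<subseteq> N (j - 1) \<Longrightarrow> P = N j"
proof -
  assume P: "submod act P" "j \<le> len" "P \<subseteq> N j" "\<not> P \<subseteq> N (j - 1)"
  obtain k where k: "k \<le> len" "P = N k" by (rule submod_eq_N[OF P(1)])
  have "k \<le> j" using P k N_subset_iff by simp
  moreover have "\<not> k \<le> j - 1"
  proof
    assume "k \<le> j - 1"
    then have "N k \<subseteq> N (j - 1)" using P(2) by (intro N_mono) auto
    then show False using P k by simp
  qed
  ultimately have "k = j" by arith
  then show ?thesis using k by simp
qed

lemma exists_in_N_notin_pred: "1 \<le> j \<Longrightarrow> j \<le> len \<Longrightarrow> \<exists>x. x \<in> N j \<and> x \<notin> N (j - 1)"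
  using N_strict_mono[of "j - 1" j] by auto

lemma submod_eq_UNIV_if_generator:
  assumes "x \<notin> N (len - 1)" "submod act P" "x \<in> P"
  shows "P = UNIV"
proof -
  obtain k where k: "k \<le> len" "P = N k" by (rule submod_eq_N[OF assms(2)])
  have "\<not> k \<le> len - 1" using assms k N_mono[of k "len - 1"] by auto
  then have "k = len" using k by simp
  then show ?thesis using k N_len by simp
qed

lemma card_submods_above:
  assumes "i \<le> len"
  shows "card {P. submod act P \<and> N i \<subseteq> P} = Suc (len - i)"
proof -
  have "{P. submod act P \<and> N i \<subseteq> P} = N ` {i..len}"
  proof
    show "{P. submod act P \<and> N i \<subseteq> P} \<subseteq> N ` {i..len}"
    proof
      fix P assume "P \<in> {P. submod act P \<and> N i \<subseteq> P}"
      then have P: "submod act P" "N i \<subseteq> P" by auto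
      obtain k where k: "k \<le> len" "P = N k" by (rule submod_eq_N[OF P(1)])
      then have "i \<le> k" using P assms N_subset_iff by simp
      with k show "P \<in> N ` {i..len}" by auto
    qed
    show "N ` {i..len} \<subseteq> {P. submod act P \<and> N i \<subseteq> P}"
    proof
      fix P assume "P \<in> N ` {i..len}"
      then obtain k where "i \<le> k" "k \<le> len" "P = N k" by auto
      then show "P \<in> {P. submod act P \<and> N i \<subseteq> P}" using N_submod N_mono[of i k] by auto
    qed
  qed
  moreover have "inj_on N {i..len}" using N_eq_iff by (auto intro!: inj_onI)
  ultimately show ?thesis using assms by (simp add: card_image Suc_diff_le)
qed

lemma card_submods_below:
  assumes "j \<le> len"
  shows "card {Q. submod act Q \<and> Q \<subseteq> N j} = Suc j"
proof -
  have "{Q. submod act Q \<and> Q \<subseteq> N j} = N ` {..j}"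
  proof
    show "{Q. submod act Q \<and> Q \<subseteq> N j} \<subseteq> N ` {..j}"
    proof
      fix Q assume "Q \<in> {Q. submod act Q \<and> Q \<subseteq> N j}"
      then have Q: "submod act Q" "Q \<subseteq> N j" by auto
      obtain k where k: "k \<le> len" "Q = N k" by (rule submod_eq_N[OF Q(1)])
      then have "k \<le> j" using Q assms N_subset_iff by simp
      with k show "Q \<in> N ` {..j}" by auto
    qed
    show "N ` {..j} \<subseteq> {Q. submod act Q \<and> Q \<subseteq> N j}"
      using N_submod N_mono assms by auto
  qed
  moreover have "inj_on N {..j}" using N_eq_iff assms by (auto intro!: inj_onI)
  ultimately show ?thesis by (simp add: card_image)
qed

lemma maximal_left_ideal_annihilator:
  assumes j: "1 \<le> j" "j \<le> len" and x: "x \<in> N j" "x \<notin> N (j - 1)"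
  shows "maximal_left_ideal {b. act b x \<in> N (j - 1)}"
  unfolding maximal_left_ideal_def
proof (intro conjI allI impI)
  let ?I = "{b. act b x \<in> N (j - 1)}"
  have sub_j: "submod act (N j)" and sub_pred: "submod act (N (j - 1))" using N_submod j by auto
  show "left_ideal ?I" using sub_pred by (rule left_ideal_annihilator)
  show "?I \<noteq> UNIV"
  proof
    assume "?I = UNIV"
    then have "1 \<in> ?I" by (rule ssubst) simp
    then show False using x by simp
  qed
  fix K assume K: "left_ideal K \<and> ?I \<subseteq> K \<and> K \<noteq> UNIV"
  show "K = ?I"
  proof (rule ccontr)
    assume "K \<noteq> ?I"
    then obtain b where b: "b \<in> K" "b \<notin> ?I" using K by blast
    define P where "P = {act r x + z | r z. r \<in> K \<and> z \<in> N (j - 1)}"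
    have "submod act P" unfolding P_def using K sub_pred by (intro submod_left_ideal_orbit) auto
    moreover have "P \<subseteq> N j"
      unfolding P_def using N_mono[of "j - 1" j] j sub_j x(1) submod_act submod_add by fastforce
    moreover have "act b x \<in> P" unfolding P_def using b submod_0[OF sub_pred] by force
    then have "\<not> P \<subseteq> N (j - 1)" using b by auto
    ultimately have "P = N j" using j by (intro eq_N_if_not_subset_pred) auto
    then obtain r z where rz: "r \<in> K" "z \<in> N (j - 1)" "x = act r x + z"
      using x(1) unfolding P_def by blast
    then have "act (1 - r) x = z" by (metis act_diff_left act_one add_diff_cancel_left')
    then have "1 - r \<in> K" using rz K by auto
    then have "(1 - r) + r \<in> K" using rz K left_ideal_add by blast
    then have "s \<in> K" for s using K left_ideal_mult[of K 1 s] by simp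
    then show False using K by blast
  qed
qed

lemma jacobson_act_N:
  assumes "j \<le> len" "a \<in> jacobson" "x \<in> N j"
  shows "act a x \<in> N (j - 1)"
proof (cases "x \<in> N (j - 1)")
  case True
  then show ?thesis using N_submod assms(1) submod_act by simp
next
  case False
  then have "1 \<le> j" using assms(3) by (cases j) auto
  then have "jacobson \<subseteq> {b. act b x \<in> N (j - 1)}"
    using maximal_left_ideal_annihilator assms False jacobson_subset by blast
  then show ?thesis using assms(2) by auto
qed

lemma maximal_left_ideal_not_subset_annihilator:
  assumes j: "2 \<le> j" "j \<le> len" and y: "y \<in> N j" "y \<notin> N (j - 1)"
    and m: "maximal_left_ideal m"
  shows "\<not> m \<subseteq> {b. act b y \<in> N (j - 2)}"
proof
  let ?I1 = "{b. act b y \<in> N (j - 2)}" and ?I2 = "{b. act b y \<in> N (j - 1)}"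
  assume m_I1: "m \<subseteq> ?I1"
  have sub_j: "submod act (N j)" and sub_pred: "submod act (N (j - 1))"
    and sub_pred2: "submod act (N (j - 2))" using N_submod j by auto
  have N_pred2: "N (j - 2) \<subset> N (j - 1)" using j by (intro N_strict_mono) auto
  have I2_max: "maximal_left_ideal ?I2" using j y by (intro maximal_left_ideal_annihilator) auto
  have "m \<subseteq> ?I2" using m_I1 N_pred2 by auto
  then have I2_eq: "?I2 = m" using maximal_left_idealD[OF I2_max] maximal_left_idealD(3)[OF m] by blast
  define P where "P = {act r y + w | r w. r \<in> UNIV \<and> w \<in> N (j - 2)}"
  have "submod act P"
    unfolding P_def using sub_pred2 by (intro submod_left_ideal_orbit left_ideal_UNIV)
  moreover have "P \<subseteq> N j"
  proof
    fix z assume "z \<in> P"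
    then obtain r w where "w \<in> N (j - 2)" "z = act r y + w" unfolding P_def by blast
    moreover have "N (j - 2) \<subseteq> N j" using j by (intro N_mono) auto
    ultimately show "z \<in> N j" using sub_j y(1) submod_act submod_add by blast
  qed
  moreover have "y = act 1 y + 0" by simp
  then have "y \<in> P" unfolding P_def using submod_0[OF sub_pred2] by blast
  then have "\<not> P \<subseteq> N (j - 1)" using y by auto
  ultimately have P_eq: "P = N j" using j by (intro eq_N_if_not_subset_pred) auto
  obtain z where z: "z \<in> N (j - 1)" "z \<notin> N (j - 2)" using N_pred2 by blast
  moreover have "N (j - 1) \<subseteq> N j" using j by (intro N_mono) auto
  ultimately obtain r w where rw: "w \<in> N (j - 2)" "z = act r y + w"
    using P_eq unfolding P_def by blast
  then have "act r y = z - w" by simp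
  moreover have "z - w \<in> N (j - 1)" using z rw N_pred2 submod_diff[OF sub_pred] by blast
  ultimately have "r \<in> m" using I2_eq by auto
  then have "act r y \<in> N (j - 2)" using m_I1 by blast
  then show False using z rw submod_add[OF sub_pred2] by blast
qed

text \<open>Otherwise N j / N (j - 2) would be a module over the semisimple ring \<open>\<Lambda>/J\<close>, hence
  semisimple, contradicting uniseriality.\<close>
lemma exists_jacobson_act_notin:
  assumes j: "2 \<le> j" "j \<le> len"
  shows "\<exists>a\<in>jacobson. \<exists>x\<in>N j. act a x \<notin> N (j - 2)"
proof (rule ccontr)
  assume "\<not> ?thesis"
  then have H: "\<And>a x. a \<in> jacobson \<Longrightarrow> x \<in> N j \<Longrightarrow> act a x \<in> N (j - 2)" by blast
  have sub_j: "submod act (N j)" and sub_pred: "submod act (N (j - 1))" using N_submod j by auto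
  have N_pred2: "N (j - 2) \<subseteq> N (j - 1)" using j by (intro N_mono) auto
  have "1 \<le> j" using j by simp
  then obtain x where x: "x \<in> N j" "x \<notin> N (j - 1)" using exists_in_N_notin_pred j by blast
  obtain F :: "'a set set" and e where F: "finite F" "\<forall>m\<in>F. maximal_left_ideal m"
    and e_sum: "1 - (\<Sum>m\<in>F. e m) \<in> jacobson" and e_mult: "\<forall>m\<in>F. \<forall>b\<in>m. b * e m \<in> jacobson"
    using jacobson_decomposition by blast
  have e_x: "act (e m) x \<in> N (j - 1)" if m: "m \<in> F" for m
  proof (rule ccontr)
    assume y: "act (e m) x \<notin> N (j - 1)"
    have "m \<subseteq> {b. act b (act (e m) x) \<in> N (j - 2)}"
      using H e_mult m x(1) by (auto simp: act_mult[symmetric])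
    moreover have "act (e m) x \<in> N j" using sub_j x(1) by (rule submod_act)
    ultimately show False using maximal_left_ideal_not_subset_annihilator j y F(2) m by blast
  qed
  have "x = act (1 - (\<Sum>m\<in>F. e m)) x + (\<Sum>m\<in>F. act (e m) x)"
    by (simp add: act_diff_left act_sum_left)
  moreover have "act (1 - (\<Sum>m\<in>F. e m)) x \<in> N (j - 1)" using H e_sum x(1) N_pred2 by blast
  moreover have "(\<Sum>m\<in>F. act (e m) x) \<in> N (j - 1)" using sub_pred e_x by (rule submod_sum)
  ultimately have "x \<in> N (j - 1)" using sub_pred by (metis submod_add)
  then show False using x by simp
qed

lemma radical_N:
  assumes "j \<le> len"
  shows "gen_submod act {act a x | a x. a \<in> jacobson \<and> x \<in> N j} = N (j - 1)"
    (is "gen_submod act ?X = _")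
proof -
  have "?X \<subseteq> N (j - 1)" using jacobson_act_N[OF assms] by auto
  then have rad_sub: "gen_submod act ?X \<subseteq> N (j - 1)"
    using N_submod assms by (intro gen_submod_least) auto
  obtain k where k: "k \<le> len" "gen_submod act ?X = N k"
    by (rule submod_eq_N[OF gen_submod_submod[of ?X]])
  have "k \<le> j - 1" using rad_sub k N_subset_iff assms by auto
  moreover have "\<not> k < j - 1"
  proof
    assume "k < j - 1"
    then have "N k \<subseteq> N (j - 2)" using assms by (intro N_mono) auto
    then have "?X \<subseteq> N (j - 2)" using k(2) gen_submod_superset[of ?X] by simp
    moreover have "2 \<le> j" using \<open>k < j - 1\<close> by simp
    then obtain a x where "a \<in> jacobson" "x \<in> N j" "act a x \<notin> N (j - 2)"
      using exists_jacobson_act_notin assms by blast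
    ultimately show False by blast
  qed
  ultimately show ?thesis using k by simp
qed

lemma rad_pow_eq_N: "rad_pow act d = N (len - d)"
proof (induction d)
  case 0
  show ?case using N_len by simp
next
  case (Suc d)
  then show ?case using radical_N[of "len - d"] by simp
qed

lemma loewy_length_eq_len: "loewy_length act = len"
  unfolding loewy_length_def
proof (rule Least_equality)
  show "rad_pow act len = {0}" using rad_pow_eq_N N_0 by simp
  fix d assume "rad_pow act d = {0}"
  then have "N (len - d) = N 0" using rad_pow_eq_N N_0 by simp
  then show "len \<le> d" using N_eq_iff by simp
qed

lemma simple_over_N_iff:
  assumes "l < len"
  shows "simple_over act (N l) S \<longleftrightarrow> S = N (Suc l)"
proof
  assume S: "simple_over act (N l) S"
  then have "N (Suc l) \<subseteq> S" using N_Suc_subset assms unfolding simple_over_def by blast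
  moreover have "N l \<subset> N (Suc l)" "submod act (N (Suc l))"
    using assms N_strict_mono N_submod by auto
  ultimately show "S = N (Suc l)" using S unfolding simple_over_def by blast
next
  assume S: "S = N (Suc l)"
  show "simple_over act (N l) S"
    unfolding simple_over_def
  proof (intro conjI allI impI)
    show "submod act S" "N l \<subset> S" using S assms N_submod N_strict_mono by auto
    fix T assume T: "submod act T \<and> N l \<subseteq> T \<and> T \<subseteq> S"
    show "T = N l \<or> T = S"
    proof (cases "T = N l")
      case False
      then have "N (Suc l) \<subseteq> T" using T assms N_Suc_subset by blast
      then show ?thesis using T S by blast
    qed simp
  qed
qed

lemma soc_ser_eq_N: "soc_ser act l = N (min l len)"
proof (induction l)
  case 0
  show ?case using N_0 by simp
next
  case (Suc l)
  show ?case
  proof (cases "l < len")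
    case True
    then have "{S. simple_over act (soc_ser act l) S} = {N (Suc l)}"
      using Suc simple_over_N_iff by auto
    moreover have "N l \<subseteq> N (Suc l)" using True by (intro N_mono) auto
    ultimately have "soc_ser act (Suc l) = gen_submod act (N (Suc l))"
      using Suc True by (simp add: Un_absorb1)
    then show ?thesis using True N_submod gen_submod_eq by simp
  next
    case False
    then have "soc_ser act l = UNIV" using Suc N_len by simp
    moreover have "{S. simple_over act UNIV S} = {}" unfolding simple_over_def by auto
    ultimately have "soc_ser act (Suc l) = UNIV" by (simp add: gen_submod_eq submod_UNIV)
    then show ?thesis using False N_len by simp
  qed
qed

lemma coset_eq_iff: "submod act K \<Longrightarrow> coset x K = coset y K \<longleftrightarrow> x - y \<in> K"
proof
  assume K: "submod act K" and eq: "coset x K = coset y K"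
  have "x \<in> coset x K" unfolding coset_def using submod_0[OF K] by force
  then obtain k where "k \<in> K" "x = y + k" using eq unfolding coset_def by auto
  then show "x - y \<in> K" by simp
next
  assume K: "submod act K" and d: "x - y \<in> K"
  have "x + k = y + ((x - y) + k)" "y + k = x + (k - (x - y))" for k by simp_all
  then show "coset x K = coset y K"
    unfolding coset_def using d submod_add[OF K] submod_diff[OF K] by blast
qed

end

section \<open>Homomorphisms between uniserial modules\<close>

locale uniserial_pair = M1: uniserial_module scal act1 + M2: uniserial_module scal act2
  for scal :: "'k::field \<Rightarrow> 'a::ring_1 \<Rightarrow> 'a"
    and act1 :: "'a \<Rightarrow> 'm1::ab_group_add \<Rightarrow> 'm1"
    and act2 :: "'a \<Rightarrow> 'm2::ab_group_add \<Rightarrow> 'm2"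
begin

lemma hom_add: "f \<in> hom act1 act2 \<Longrightarrow> f (x + y) = f x + f y"
  and hom_act: "f \<in> hom act1 act2 \<Longrightarrow> f (act1 a x) = act2 a (f x)"
  unfolding hom_def by blast+

lemma hom_0: "f \<in> hom act1 act2 \<Longrightarrow> f 0 = 0"
  using hom_add[of f 0 0] by simp

lemma hom_diff: "f \<in> hom act1 act2 \<Longrightarrow> f (x - y) = f x - f y"
  using hom_add[of f "x - y" y] by (simp add: eq_diff_eq)

lemma hom_kscale: "f \<in> hom act1 act2 \<Longrightarrow> f (M1.kscale c x) = M2.kscale c (f x)"
  by (simp add: smul_def hom_act)

lemma submod_image_hom:
  assumes f: "f \<in> hom act1 act2" and P: "submod act1 P"
  shows "submod act2 (f ` P)"
  unfolding submod_def
proof (intro conjI ballI allI)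
  show "0 \<in> f ` P" using hom_0[OF f] M1.submod_0[OF P] by (metis imageI)
  fix y z a assume "y \<in> f ` P"
  then obtain x where x: "x \<in> P" "y = f x" by blast
  show "act2 a y \<in> f ` P" using x P hom_act[OF f] M1.submod_act by (metis imageI)
  assume "z \<in> f ` P"
  then obtain x' where "x' \<in> P" "z = f x'" by blast
  then show "y + z \<in> f ` P" using x P hom_add[OF f] M1.submod_add by (metis imageI)
qed

lemma submod_range_hom: "f \<in> hom act1 act2 \<Longrightarrow> submod act2 (range f)"
  using submod_image_hom[OF _ M1.submod_UNIV] by simp

lemma submod_vimage_hom: "f \<in> hom act1 act2 \<Longrightarrow> submod act2 Q \<Longrightarrow> submod act1 (f -` Q)"
  unfolding submod_def by (auto simp: hom_0 hom_add hom_act)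

lemma submod_kernel_hom: "f \<in> hom act1 act2 \<Longrightarrow> submod act1 {x. f x = 0}"
  using submod_vimage_hom[of f "{0}"] M2.submod_zero by (simp add: vimage_def)

text \<open>Image and preimage give a bijection between the submodules above the kernel and those
  inside the range; counting both chains identifies the range.\<close>
lemma range_hom_eq_N:
  assumes f: "f \<in> hom act1 act2" and i: "i \<le> M1.len" and ker: "{x. f x = 0} = M1.N i"
  shows "M1.len - i \<le> M2.len \<and> range f = M2.N (M1.len - i)"
proof -
  obtain j where j: "j \<le> M2.len" "range f = M2.N j" by (rule M2.submod_eq_N[OF submod_range_hom[OF f]])
  let ?A = "{P. submod act1 P \<and> M1.N i \<subseteq> P}"
  let ?B = "{Q. submod act2 Q \<and> Q \<subseteq> M2.N j}"
  have "\<forall>P\<in>?A. f -` (f ` P) = P"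
  proof (intro ballI equalityI subsetI)
    fix P x assume P: "P \<in> ?A" and "x \<in> f -` f ` P"
    then obtain x' where x': "x' \<in> P" "f x = f x'" by auto
    then have "f (x - x') = 0" using hom_diff[OF f] by simp
    then have "x - x' \<in> P" using ker P by blast
    then have "(x - x') + x' \<in> P" using P x' M1.submod_add by blast
    then show "x \<in> P" by simp
  qed auto
  moreover have "\<forall>Q\<in>?B. f ` (f -` Q) = Q" using j(2) by auto
  ultimately have "bij_betw (\<lambda>P. f ` P) ?A ?B"
    by (rule bij_betw_byWitness)
      (use submod_image_hom[OF f] submod_vimage_hom[OF f] ker M2.submod_0 j(2) in auto)
  then have "card ?A = card ?B" by (rule bij_betw_same_card)
  then have "Suc (M1.len - i) = Suc j" using M1.card_submods_above[OF i] M2.card_submods_below[OF j(1)] by simp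
  then show ?thesis using j by simp
qed

lemma kernel_hom_eq_N:
  assumes f: "f \<in> hom act1 act2" and "L \<le> M2.len" and range: "range f = M2.N L"
  shows "L \<le> M1.len \<and> {x. f x = 0} = M1.N (M1.len - L)"
proof -
  obtain k where k: "k \<le> M1.len" "{x. f x = 0} = M1.N k"
    by (rule M1.submod_eq_N[OF submod_kernel_hom[OF f]])
  then have "M1.len - k \<le> M2.len" "M2.N (M1.len - k) = M2.N L"
    using range_hom_eq_N[OF f k] range by simp_all
  then have "M1.len - k = L" using M2.N_eq_iff[OF _ assms(2)] by simp
  then have "L \<le> M1.len" "k = M1.len - L" using k(1) by auto
  then show ?thesis using k(2) by simp
qed

lemma range_hom_subset_N_if_kernel:
  assumes f: "f \<in> hom act1 act2" and L: "1 \<le> L" "L \<le> M2.len"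
    and z: "f z = 0" "z \<notin> M1.N (M1.len - L)"
  shows "range f \<subseteq> M2.N (L - 1)"
proof -
  obtain k where k: "k \<le> M1.len" "{x. f x = 0} = M1.N k"
    by (rule M1.submod_eq_N[OF submod_kernel_hom[OF f]])
  have "\<not> k \<le> M1.len - L" using z k M1.N_mono[of k "M1.len - L"] by auto
  then have "M1.len - k \<le> L - 1" by simp
  moreover have "range f = M2.N (M1.len - k)" using range_hom_eq_N[OF f k] by simp
  ultimately show ?thesis using L by (simp add: M2.N_mono)
qed

lemma range_hom_subset_if_generator:
  assumes f: "f \<in> hom act1 act2" and Q: "submod act2 Q"
    and x: "x \<notin> M1.N (M1.len - 1)" "f x \<in> Q"
  shows "range f \<subseteq> Q"
proof -
  have "f -` Q = UNIV" using M1.submod_eq_UNIV_if_generator[OF x(1) submod_vimage_hom[OF f Q]] x(2) by simp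
  then show ?thesis by auto
qed

lemma hom_factor_through:
  assumes "f \<in> hom act1 act2" "g \<in> hom act1 act2" "\<And>x. f x = 0 \<Longrightarrow> g x = 0"
  shows "\<exists>T. \<forall>z. T (f z) = g z"
proof -
  have "g (SOME z'. f z' = f z) = g z" for z
  proof -
    have "f (SOME z'. f z' = f z) = f z" by (rule someI) (rule refl)
    then have "f ((SOME z'. f z' = f z) - z) = 0" using hom_diff[OF assms(1)] by simp
    then have "g ((SOME z'. f z' = f z) - z) = 0" by (rule assms(3))
    then show ?thesis using hom_diff[OF assms(2)] by simp
  qed
  then show ?thesis by (intro exI[of _ "\<lambda>w. g (SOME z. f z = w)"]) simp
qed

lemma hom_quot_iso_projection:
  assumes qi: "quot_iso act1 act2 K S phi" and K: "submod act1 K"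
  shows "(\<lambda>x. phi (coset x K)) \<in> hom act1 act2" "range (\<lambda>x. phi (coset x K)) = S"
    "phi (coset x K) = 0 \<longleftrightarrow> x \<in> K"
proof -
  have bij: "bij_betw phi (range (\<lambda>x. coset x K)) S"
    using qi unfolding quot_iso_def by blast
  show hom: "(\<lambda>x. phi (coset x K)) \<in> hom act1 act2"
    using qi unfolding quot_iso_def hom_def by simp
  have "range (\<lambda>x. phi (coset x K)) = phi ` range (\<lambda>x. coset x K)" by auto
  then show "range (\<lambda>x. phi (coset x K)) = S" using bij unfolding bij_betw_def by simp
  have "phi (coset 0 K) = 0" using hom_0[OF hom] by simp
  moreover have "inj_on phi (range (\<lambda>x. coset x K))" using bij by (rule bij_betw_imp_inj_on)
  then have "phi (coset x K) = phi (coset 0 K) \<longleftrightarrow> coset x K = coset 0 K"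
    by (auto dest: inj_onD)
  ultimately show "phi (coset x K) = 0 \<longleftrightarrow> x \<in> K" using M1.coset_eq_iff[OF K] by simp
qed

lemma quot_iso_kernel_range:
  assumes f: "f \<in> hom act1 act2"
  shows "\<exists>phi. quot_iso act1 act2 {x. f x = 0} (range f) phi"
proof -
  let ?K = "{x. f x = 0}"
  have K: "submod act1 ?K" by (rule submod_kernel_hom[OF f])
  define phi where "phi C = f (SOME x. C = coset x ?K)" for C
  have phi_coset: "phi (coset x ?K) = f x" for x
  proof -
    have "coset x ?K = coset (SOME y. coset x ?K = coset y ?K) ?K" by (rule someI) (rule refl)
    then have "x - (SOME y. coset x ?K = coset y ?K) \<in> ?K" using M1.coset_eq_iff[OF K] by blast
    then show ?thesis unfolding phi_def using hom_diff[OF f] by simp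
  qed
  have "inj_on phi (range (\<lambda>x. coset x ?K))"
  proof (rule inj_onI)
    fix C D assume "C \<in> range (\<lambda>x. coset x ?K)" "D \<in> range (\<lambda>x. coset x ?K)" "phi C = phi D"
    then obtain x y where xy: "C = coset x ?K" "D = coset y ?K" "f x = f y" using phi_coset by auto
    then have "x - y \<in> ?K" using hom_diff[OF f] by simp
    then show "C = D" using xy M1.coset_eq_iff[OF K] by blast
  qed
  moreover have "phi ` range (\<lambda>x. coset x ?K) = range f" using phi_coset by (auto simp: image_iff)
  ultimately have "quot_iso act1 act2 ?K (range f) phi"
    unfolding quot_iso_def bij_betw_def using phi_coset hom_add[OF f] hom_act[OF f] by simp
  then show ?thesis by blast
qed

lemma S_set_eq:
  "S_set act1 act2 = {l. 1 \<le> l \<and> l \<le> min M1.len M2.len \<and>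
     (\<exists>psi. quot_iso act1 act2 (M1.N (M1.len - l)) (M2.N l) psi)}"
  unfolding S_set_def M1.loewy_length_eq_len M2.loewy_length_eq_len
  using M1.rad_pow_eq_N M2.soc_ser_eq_N by (intro Collect_cong) (auto simp: min_def)

lemma finite_S_set: "finite (S_set act1 act2)"
  by (rule finite_subset[of _ "{..M2.len}"]) (auto simp: S_set_eq)

context
  fixes phi :: "nat \<Rightarrow> 'm1 set \<Rightarrow> 'm2"
  assumes phi: "\<forall>l\<in>S_set act1 act2. quot_iso act1 act2 (rad_pow act1 l) (soc_ser act2 l) (phi l)"
begin

lemma S_set_bounds: "l \<in> S_set act1 act2 \<Longrightarrow> 1 \<le> l \<and> l \<le> M1.len \<and> l \<le> M2.len"
  by (auto simp: S_set_eq)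

lemma alpha_hom: "l \<in> S_set act1 act2 \<Longrightarrow> alpha act1 phi l \<in> hom act1 act2"
  and range_alpha: "l \<in> S_set act1 act2 \<Longrightarrow> range (alpha act1 phi l) = M2.N l"
  and alpha_eq_0_iff: "l \<in> S_set act1 act2 \<Longrightarrow> alpha act1 phi l x = 0 \<longleftrightarrow> x \<in> M1.N (M1.len - l)"
proof -
  assume l: "l \<in> S_set act1 act2"
  then have "quot_iso act1 act2 (rad_pow act1 l) (soc_ser act2 l) (phi l)" using phi by blast
  then have "quot_iso act1 act2 (M1.N (M1.len - l)) (M2.N l) (phi l)"
    using S_set_bounds[OF l] by (simp add: M1.rad_pow_eq_N M2.soc_ser_eq_N min_def)
  moreover have "alpha act1 phi l = (\<lambda>x. phi l (coset x (M1.N (M1.len - l))))"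
    by (simp add: alpha_def[abs_def] M1.rad_pow_eq_N)
  ultimately show "alpha act1 phi l \<in> hom act1 act2" "range (alpha act1 phi l) = M2.N l"
    "alpha act1 phi l x = 0 \<longleftrightarrow> x \<in> M1.N (M1.len - l)"
    using hom_quot_iso_projection M1.N_submod by simp_all
qed

lemma alpha_generator_notin_N_pred:
  assumes L: "L \<in> S_set act1 act2" and x0: "x0 \<notin> M1.N (M1.len - 1)"
  shows "alpha act1 phi L x0 \<notin> M2.N (L - 1)"
proof
  have L_bounds: "1 \<le> L" "L \<le> M2.len" using S_set_bounds[OF L] by auto
  have sub: "submod act2 (M2.N (L - 1))" using L_bounds M2.N_submod by simp
  assume "alpha act1 phi L x0 \<in> M2.N (L - 1)"
  then have "range (alpha act1 phi L) \<subseteq> M2.N (L - 1)"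
    using range_hom_subset_if_generator[OF alpha_hom[OF L] sub x0] by blast
  moreover have "M2.N (L - 1) \<subset> M2.N L" using L_bounds by (intro M2.N_strict_mono) auto
  ultimately show False using range_alpha[OF L] by simp
qed

lemma alpha_linear_independent:
  assumes sum0: "(\<lambda>x. \<Sum>l\<in>S_set act1 act2. M2.kscale (c l) (alpha act1 phi l x)) = (\<lambda>x. 0)"
  shows "\<forall>l\<in>S_set act1 act2. c l = 0"
proof (rule ccontr)
  let ?S = "S_set act1 act2"
  let ?Z = "{l\<in>?S. c l \<noteq> 0}"
  assume "\<not> (\<forall>l\<in>?S. c l = 0)"
  then have "?Z \<noteq> {}" by blast
  moreover have fin_Z: "finite ?Z" using finite_S_set by simp
  ultimately have "Max ?Z \<in> ?Z" by (rule Max_in[rotated])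
  define L where "L = Max ?Z"
  have L: "L \<in> ?S" "c L \<noteq> 0" using \<open>Max ?Z \<in> ?Z\<close> unfolding L_def by auto
  have above_L: "c l = 0" if "l \<in> ?S" "L < l" for l
    using Max_ge[OF fin_Z, of l] that unfolding L_def by fastforce
  have L_bounds: "1 \<le> L" "L \<le> M2.len" using S_set_bounds[OF L(1)] by auto
  have sub: "submod act2 (M2.N (L - 1))" using L_bounds M2.N_submod by simp
  obtain x0 where x0: "x0 \<notin> M1.N (M1.len - 1)"
    using M1.exists_in_N_notin_pred M1.len_pos by blast
  have "alpha act1 phi L x0 \<notin> M2.N (L - 1)" by (rule alpha_generator_notin_N_pred[OF L(1) x0])
  then have "M2.kscale (c L) (alpha act1 phi L x0) \<notin> M2.N (L - 1)"
    using M2.submod_kscale_cancel[OF sub L(2)] by blast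
  moreover have "M2.kscale (c l) (alpha act1 phi l x0) \<in> M2.N (L - 1)" if l: "l \<in> ?S - {L}" for l
  proof (cases "L < l")
    case True
    then show ?thesis using above_L l M2.submod_0[OF sub] by simp
  next
    case False
    then have "M2.N l \<subseteq> M2.N (L - 1)" using l L_bounds by (intro M2.N_mono) auto
    then show ?thesis using range_alpha[of l] l M2.submod_kscale[OF sub] by blast
  qed
  then have "(\<Sum>l\<in>?S - {L}. M2.kscale (c l) (alpha act1 phi l x0)) \<in> M2.N (L - 1)"
    using sub by (intro M2.submod_sum) auto
  moreover have "M2.kscale (c L) (alpha act1 phi L x0)
      = - (\<Sum>l\<in>?S - {L}. M2.kscale (c l) (alpha act1 phi l x0))"
  proof -
    have "(\<Sum>l\<in>?S. M2.kscale (c l) (alpha act1 phi l x0)) = 0" using fun_cong[OF sum0, of x0] by simp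
    then show ?thesis
      by (simp add: sum.remove[OF finite_S_set L(1)] eq_neg_iff_add_eq_0)
  qed
  ultimately show False using M2.submod_minus[OF sub] by metis
qed

lemma in_S_set_if_range_hom:
  assumes g: "g \<in> hom act1 act2" and L: "1 \<le> L" "L \<le> M2.len" and range: "range g = M2.N L"
  shows "L \<in> S_set act1 act2"
proof -
  have "L \<le> M1.len" "{x. g x = 0} = M1.N (M1.len - L)"
    using kernel_hom_eq_N[OF g L(2) range] by auto
  then show ?thesis
    using quot_iso_kernel_range[OF g] L range unfolding S_set_eq by auto
qed

lemma hom_agrees_with_multiple_of_alpha:
  assumes alg: "alg_closed_field TYPE('k)" and g: "g \<in> hom act1 act2"
    and L: "L \<in> S_set act1 act2" and range: "range g = M2.N L"
  shows "\<exists>c z. z \<notin> M1.N (M1.len - L) \<and> g z = M2.kscale c (alpha act1 phi L z)"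
proof -
  let ?a = "alpha act1 phi L"
  have L_bounds: "1 \<le> L" "L \<le> M2.len" using S_set_bounds[OF L] by auto
  have kernel_g: "g x = 0 \<longleftrightarrow> x \<in> M1.N (M1.len - L)" for x
    using kernel_hom_eq_N[OF g L_bounds(2) range] by blast
  obtain T where T: "\<And>z. T (?a z) = g z"
    using hom_factor_through[OF alpha_hom[OF L] g] kernel_g alpha_eq_0_iff[OF L] by blast
  have in_range: "\<exists>z. w = ?a z" if "w \<in> M2.N L" for w using range_alpha[OF L] that by auto
  obtain W where W: "finite W" "M2.V.span W = UNIV" using M2.finite_spanning_set_module by blast
  have "M2.N 0 \<subset> M2.N L" using L_bounds by (intro M2.N_strict_mono) auto
  then obtain w where w: "w \<in> M2.N L" "w \<noteq> 0" using M2.N_0 by blast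
  have "\<exists>c u. u \<in> M2.N L \<and> u \<noteq> 0 \<and> T u = M2.kscale c u"
  proof (rule M2.V.eigenvector_exists[OF _ _ _ _ alg W(1) _ w])
    show "M2.V.subspace (M2.N L)" using M2.submod_subspace M2.N_submod L_bounds by simp
    show "T v \<in> M2.N L" if "v \<in> M2.N L" for v
      using in_range[OF that] T range by (metis rangeI)
    show "T (x + y) = T x + T y" if "x \<in> M2.N L" "y \<in> M2.N L" for x y
      using in_range[OF that(1)] in_range[OF that(2)] T hom_add[OF g] hom_add[OF alpha_hom[OF L]]
      by (metis (no_types))
    show "T (M2.kscale c x) = M2.kscale c (T x)" if "x \<in> M2.N L" for c x
      using in_range[OF that] T hom_kscale[OF g] hom_kscale[OF alpha_hom[OF L]] by (metis (no_types))
    show "M2.N L \<subseteq> M2.V.span W" using W(2) by simp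
  qed
  then obtain c u where u: "u \<in> M2.N L" "u \<noteq> 0" "T u = M2.kscale c u" by blast
  obtain z where z: "u = ?a z" using in_range[OF u(1)] by blast
  then have "z \<notin> M1.N (M1.len - L)" using u(2) alpha_eq_0_iff[OF L] by simp
  moreover have "g z = M2.kscale c (?a z)" using T u z by simp
  ultimately show ?thesis by blast
qed

lemma hom_in_span_alpha_if_range_subset:
  assumes alg: "alg_closed_field TYPE('k)" and "i \<le> M2.len"
  shows "g \<in> hom act1 act2 \<Longrightarrow> range g \<subseteq> M2.N i
    \<Longrightarrow> \<exists>c. g = (\<lambda>x. \<Sum>l\<in>S_set act1 act2. M2.kscale (c l) (alpha act1 phi l x))"
  using assms(2)
proof (induction i arbitrary: g)
  case 0
  then have "g = (\<lambda>x. 0)" using M2.N_0 by auto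
  then show ?case by (intro exI[of _ "\<lambda>_. 0"]) simp
next
  case (Suc i)
  let ?S = "S_set act1 act2"
  show ?case
  proof (cases "range g \<subseteq> M2.N i")
    case True
    then show ?thesis using Suc by simp
  next
    case False
    let ?L = "Suc i"
    have range: "range g = M2.N ?L"
      using M2.eq_N_if_not_subset_pred[OF submod_range_hom[OF Suc.prems(1)]] Suc.prems False by simp
    then have L: "?L \<in> ?S" using in_S_set_if_range_hom Suc.prems by simp
    obtain c0 z where z: "z \<notin> M1.N (M1.len - ?L)" "g z = M2.kscale c0 (alpha act1 phi ?L z)"
      using hom_agrees_with_multiple_of_alpha[OF alg Suc.prems(1) L range] by blast
    define h where "h x = g x - M2.kscale c0 (alpha act1 phi ?L x)" for x
    have h: "h \<in> hom act1 act2"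
      using Suc.prems(1) alpha_hom[OF L]
      by (auto simp: hom_def h_def M2.V.scale_right_distrib M2.act_diff M2.act_kscale)
    have "range h \<subseteq> M2.N i"
      using range_hom_subset_N_if_kernel[OF h _ Suc.prems(3)] z by (simp add: h_def)
    then obtain c where c: "h = (\<lambda>x. \<Sum>l\<in>?S. M2.kscale (c l) (alpha act1 phi l x))"
      using Suc.IH h Suc.prems(3) by auto
    have shift: "M2.kscale ((c(?L := c ?L + c0)) l) v
        = M2.kscale (c l) v + (if l = ?L then M2.kscale c0 v else 0)" for l v
      by (simp add: M2.V.scale_left_distrib)
    have "g x = (\<Sum>l\<in>?S. M2.kscale ((c(?L := c ?L + c0)) l) (alpha act1 phi l x))" for x
    proof -
      have "g x = h x + M2.kscale c0 (alpha act1 phi ?L x)" by (simp add: h_def)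
      also have "\<dots> = (\<Sum>l\<in>?S. M2.kscale (c l) (alpha act1 phi l x)
          + (if l = ?L then M2.kscale c0 (alpha act1 phi l x) else 0))"
        using c L finite_S_set by (simp add: sum.distrib sum.delta)
      finally show ?thesis unfolding shift .
    qed
    then show ?thesis by blast
  qed
qed

end

end

theorem proposition4p2:
  fixes scal :: "'k::field \<Rightarrow> 'a::ring_1 \<Rightarrow> 'a"
    and act1 :: "'a \<Rightarrow> 'm1::ab_group_add \<Rightarrow> 'm1"
    and act2 :: "'a \<Rightarrow> 'm2::ab_group_add \<Rightarrow> 'm2"
    and phi :: "nat \<Rightarrow> 'm1 set \<Rightarrow> 'm2"
  assumes "alg_closed_field TYPE('k)"
    and "fd_algebra scal"
    and "is_module act1" and "is_module act2"
    and "(UNIV :: 'm1 set) \<noteq> {0}" and "(UNIV :: 'm2 set) \<noteq> {0}"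
    and "uniserial act1" and "uniserial act2"
    and "\<forall>l\<in>S_set act1 act2. quot_iso act1 act2 (rad_pow act1 l) (soc_ser act2 l) (phi l)"
  shows "(\<forall>l\<in>S_set act1 act2. alpha act1 phi l \<in> hom act1 act2)
       \<and> (\<forall>c :: nat \<Rightarrow> 'k.
            (\<lambda>x. \<Sum>l\<in>S_set act1 act2. smul scal act2 (c l) (alpha act1 phi l x)) = (\<lambda>x. 0)
            \<longrightarrow> (\<forall>l\<in>S_set act1 act2. c l = 0))
       \<and> (\<forall>f\<in>hom act1 act2. \<exists>c :: nat \<Rightarrow> 'k.
            f = (\<lambda>x. \<Sum>l\<in>S_set act1 act2. smul scal act2 (c l) (alpha act1 phi l x)))"
proof -
  interpret uniserial_pair scal act1 act2
    using assms(2-8)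
    by (simp add: uniserial_pair_def uniserial_module_def uniserial_module_axioms_def fin_dim_algebra_def)
  have "\<forall>f\<in>hom act1 act2. \<exists>c.
      f = (\<lambda>x. \<Sum>l\<in>S_set act1 act2. smul scal act2 (c l) (alpha act1 phi l x))"
    using hom_in_span_alpha_if_range_subset[OF assms(9,1) order_refl] M2.N_len by simp
  then show ?thesis
    using alpha_hom[OF assms(9)] alpha_linear_independent[OF assms(9)] by blast
qed

end
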